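(* Fix a prime $p$ and $n\in\mathbb{N}$. The assignment $(A\subseteq B)\mapsto G(A\subseteq B)$ from objects of $\mathcal{S}(\mathbb{Z}/p^n)$ to groups preserves indecomposability (if $(A\subseteq B)$ is an indecomposable object of $\mathcal{S}(\mathbb{Z}/p^n)$ then $G(A\subseteq B)$ is an indecomposable group, i.e. not a direct product of two nontrivial subgroups), and it preserves and reflects isomorphisms: $(A\subseteq B)\cong(A'\subseteq B')$ in $\mathcal{S}(\mathbb{Z}/p^n)$ if and only if $G(A\subseteq B)\cong G(A'\subseteq B')$ as groups.
   Context: $\mathcal{S}(\mathbb{Z}/p^n)$ is the category whose objects are pairs $(A\subseteq B)$ where $B$ is a finite abelian group with $p^nB=0$ and $A$ is a subgroup of $B$; a morphism $(A\subseteq B)\to(A'\subseteq B')$ is a group homomorphism $f\colon B\to B'$ with $f(A)\subseteq A'$. An object is indecomposable if it is nonzero and not isomorphic to a direct sum $(A_1\oplus A_2\subseteq B_1\oplus B_2)$ of two nonzero objects. For such an object with $A$ of exponent $p^m$ and inclusion $\iota\colon A\to B$, $G(A\subseteq B)$ is the set $A\oplus B\oplus \mathbb{Z}/p^m$ with group operation $(a,b,d)+(a',b',d')=(a+a',\,b+d\,\iota(a')+b',\,d+d')$. *)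

theory Defs
  imports "HOL-Algebra.Algebra"
begin

text \<open>Objects of S(Z/p^n): a finite abelian group B (HOL-Algebra, written
multiplicatively) with p^n-th powers trivial, and a subgroup A of B.\<close>
definition S_obj :: "nat \<Rightarrow> nat \<Rightarrow> 'a set \<Rightarrow> ('a, 'm) monoid_scheme \<Rightarrow> bool" where
  "S_obj p n A B \<longleftrightarrow> comm_group B \<and> finite (carrier B) \<and>
     (\<forall>x\<in>carrier B. x [^]\<^bsub>B\<^esub> (p ^ n) = \<one>\<^bsub>B\<^esub>) \<and> subgroup A B"

definition S_hom :: "'a set \<Rightarrow> ('a, 'm) monoid_scheme \<Rightarrow> 'b set \<Rightarrow> ('b, 'n) monoid_scheme
    \<Rightarrow> ('a \<Rightarrow> 'b) \<Rightarrow> bool" where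
  "S_hom A B A' B' f \<longleftrightarrow> f \<in> hom B B' \<and> f ` A \<subseteq> A'"

definition S_iso :: "'a set \<Rightarrow> ('a, 'm) monoid_scheme \<Rightarrow> 'b set \<Rightarrow> ('b, 'n) monoid_scheme
    \<Rightarrow> bool" where
  "S_iso A B A' B' \<longleftrightarrow> (\<exists>f g. S_hom A B A' B' f \<and> S_hom A' B' A B g \<and>
      (\<forall>x\<in>carrier B. g (f x) = x) \<and> (\<forall>y\<in>carrier B'. f (g y) = y))"

definition S_nonzero :: "('a, 'm) monoid_scheme \<Rightarrow> bool" where
  "S_nonzero B \<longleftrightarrow> carrier B \<noteq> {\<one>\<^bsub>B\<^esub>}"

text \<open>Indecomposable object: nonzero and not isomorphic to a direct sum
(A1 \<oplus> A2 \<subseteq> B1 \<oplus> B2) of two nonzero objects (summands taken over the same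
element type as B).\<close>
definition S_indecomposable :: "nat \<Rightarrow> nat \<Rightarrow> 'a set \<Rightarrow> ('a, 'm) monoid_scheme \<Rightarrow> bool" where
  "S_indecomposable p n A B \<longleftrightarrow> S_obj p n A B \<and> S_nonzero B \<and>
     \<not> (\<exists>(A1 :: 'a set) (B1 :: 'a monoid) (A2 :: 'a set) (B2 :: 'a monoid).
          S_obj p n A1 B1 \<and> S_obj p n A2 B2 \<and> S_nonzero B1 \<and> S_nonzero B2 \<and>
          S_iso A B (A1 \<times> A2) (B1 \<times>\<times> B2))"

definition sub_exp :: "nat \<Rightarrow> 'a set \<Rightarrow> ('a, 'm) monoid_scheme \<Rightarrow> nat" where
  "sub_exp p A B = (LEAST m. \<forall>a\<in>A. a [^]\<^bsub>B\<^esub> (p ^ m) = \<one>\<^bsub>B\<^esub>)"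

definition Gconstr :: "nat \<Rightarrow> 'a set \<Rightarrow> ('a, 'm) monoid_scheme \<Rightarrow> ('a \<times> 'a \<times> nat) monoid" where
  "Gconstr p A B =
     (let q = p ^ sub_exp p A B in
      \<lparr> carrier = A \<times> carrier B \<times> {0..<q},
        monoid.mult = (\<lambda>(a, b, d) (a', b', d').
           (a \<otimes>\<^bsub>B\<^esub> a', b \<otimes>\<^bsub>B\<^esub> (a' [^]\<^bsub>B\<^esub> d) \<otimes>\<^bsub>B\<^esub> b', (d + d') mod q)),
        one = (\<one>\<^bsub>B\<^esub>, \<one>\<^bsub>B\<^esub>, 0) \<rparr>)"

definition group_indecomposable :: "('a, 'm) monoid_scheme \<Rightarrow> bool" where
  "group_indecomposable G \<longleftrightarrow> carrier G \<noteq> {\<one>\<^bsub>G\<^esub>} \<and>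
     \<not> (\<exists>H K. H \<lhd> G \<and> K \<lhd> G \<and> H \<noteq> {\<one>\<^bsub>G\<^esub>} \<and> K \<noteq> {\<one>\<^bsub>G\<^esub>} \<and>
          H \<inter> K = {\<one>\<^bsub>G\<^esub>} \<and> H <#>\<^bsub>G\<^esub> K = carrier G)"

end

(*
  In G = G(A \<subseteq> B) the elements (1, b, 0) form exactly the centre, a copy of B, and the
  commutators are exactly the elements (1, a, 0) with a \<in> A: commuting with (1, 1, 1) and with
  all (x, 1, 0) forces a central element into B, because the exponent of A is p^m.  So the pair
  (A \<subseteq> B) is recovered from G as (commutators \<subseteq> centre), and any group isomorphism between
  two such groups restricts to an isomorphism of pairs; conversely an isomorphism of pairs
  preserves the exponent of A and acts componentwise.
  If G is the internal direct product of H and K, then centre and commutators split along H and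
  K, which splits B = B1 \<oplus> B2 with A = (A \<inter> B1) \<oplus> (A \<inter> B2).  Both summands are nonzero: a
  factor meeting the centre trivially would be abelian, since commutators are central, hence
  central, hence trivial.
*)
theory Submission
  imports Defs "HOL-Computational_Algebra.Primes"
begin

section \<open>Centre and commutators\<close>

definition center :: "('a, 'b) monoid_scheme \<Rightarrow> 'a set" where
  "center G = {z \<in> carrier G. \<forall>g\<in>carrier G. z \<otimes>\<^bsub>G\<^esub> g = g \<otimes>\<^bsub>G\<^esub> z}"

lemma (in group) commutator_mult_eq:
  assumes "x \<in> carrier G" "y \<in> carrier G"
  shows "x \<otimes> y = (x \<otimes> y \<otimes> inv x \<otimes> inv y) \<otimes> (y \<otimes> x)"
proof -
  have "inv a \<otimes> (a \<otimes> b) = b" if "a \<in> carrier G" "b \<in> carrier G" for a b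
    using that by (simp flip: m_assoc)
  then show ?thesis
    using assms by (simp add: m_assoc)
qed

lemma (in group) derived_set_carrier_iff:
  "z \<in> derived_set G (carrier G) \<longleftrightarrow>
     z \<in> carrier G \<and> (\<exists>x\<in>carrier G. \<exists>y\<in>carrier G. x \<otimes> y = z \<otimes> (y \<otimes> x))"
proof
  assume "z \<in> derived_set G (carrier G)"
  then show "z \<in> carrier G \<and> (\<exists>x\<in>carrier G. \<exists>y\<in>carrier G. x \<otimes> y = z \<otimes> (y \<otimes> x))"
    using commutator_mult_eq by blast
next
  assume "z \<in> carrier G \<and> (\<exists>x\<in>carrier G. \<exists>y\<in>carrier G. x \<otimes> y = z \<otimes> (y \<otimes> x))"
  then obtain x y where xy: "x \<in> carrier G" "y \<in> carrier G" "z \<in> carrier G"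
    "x \<otimes> y = z \<otimes> (y \<otimes> x)" by blast
  then have "z = x \<otimes> y \<otimes> inv x \<otimes> inv y"
    using commutator_mult_eq[OF xy(1,2)] by simp
  then show "z \<in> derived_set G (carrier G)" using xy by blast
qed

lemma (in group_hom) derived_set_image:
  assumes "K \<subseteq> carrier G"
  shows "h ` derived_set G K = derived_set H (h ` K)"
proof -
  have "h (x \<otimes> y \<otimes> inv x \<otimes> inv y) = h x \<otimes>\<^bsub>H\<^esub> h y \<otimes>\<^bsub>H\<^esub> inv\<^bsub>H\<^esub> h x \<otimes>\<^bsub>H\<^esub> inv\<^bsub>H\<^esub> h y"
    if "x \<in> K" "y \<in> K" for x y
    using assms that by (auto simp: subset_iff)
  then show ?thesis
    by (simp add: image_UN)
qed

lemma iso_center_image: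
  assumes "group G" "group G'" and iso: "\<phi> \<in> iso G G'"
  shows "\<phi> ` center G = center G'"
proof -
  interpret group_hom G G' \<phi>
    using assms by (simp add: group_hom_def group_hom_axioms_def iso_imp_homomorphism)
  have inj: "inj_on \<phi> (carrier G)" and surj: "\<phi> ` carrier G = carrier G'"
    using iso by (auto simp: iso_def bij_betw_def)
  have key: "\<phi> z \<in> center G' \<longleftrightarrow> z \<in> center G" if z: "z \<in> carrier G" for z
  proof -
    have "\<phi> z \<in> center G' \<longleftrightarrow> (\<forall>g\<in>carrier G. \<phi> z \<otimes>\<^bsub>G'\<^esub> \<phi> g = \<phi> g \<otimes>\<^bsub>G'\<^esub> \<phi> z)"
      using z by (auto simp: center_def simp flip: surj)
    also have "\<dots> \<longleftrightarrow> (\<forall>g\<in>carrier G. z \<otimes>\<^bsub>G\<^esub> g = g \<otimes>\<^bsub>G\<^esub> z)"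
      using z inj by (simp add: inj_on_eq_iff flip: hom_mult)
    finally show ?thesis
      using z by (simp add: center_def)
  qed
  moreover have "center G \<subseteq> carrier G"
    unfolding center_def by blast
  ultimately have "\<phi> ` center G \<subseteq> center G'"
    by blast
  moreover have "center G' \<subseteq> \<phi> ` center G"
  proof
    fix w assume w: "w \<in> center G'"
    then obtain z where "z \<in> carrier G" "w = \<phi> z"
      using surj by (auto simp: center_def)
    with key w show "w \<in> \<phi> ` center G" by blast
  qed
  ultimately show ?thesis by blast
qed

lemma iso_derived_set_image:
  assumes "group G" "group G'" and iso: "\<phi> \<in> iso G G'"
  shows "\<phi> ` derived_set G (carrier G) = derived_set G' (carrier G')"
proof -
  interpret group_hom G G' \<phi>
    using assms by (simp add: group_hom_def group_hom_axioms_def iso_imp_homomorphism)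
  have surj: "\<phi> ` carrier G = carrier G'"
    using iso by (auto simp: iso_def bij_betw_def)
  show ?thesis
    unfolding surj[symmetric] by (rule derived_set_image[OF subset_refl])
qed

lemma (in group_hom) subgroup_vimage:
  assumes "subgroup K H"
  shows "subgroup {x \<in> carrier G. h x \<in> K} G"
proof (rule G.subgroupI)
  show "{x \<in> carrier G. h x \<in> K} \<noteq> {}"
    using assms subgroup.one_closed by fastforce
qed (use assms in \<open>auto simp: subgroup.m_closed subgroup.m_inv_closed\<close>)

section \<open>Internal direct products\<close>

locale internal_direct_product = group G for G (structure) and H K +
  assumes normal_left: "H \<lhd> G" and normal_right: "K \<lhd> G"
    and inter_trivial: "H \<inter> K = {\<one>}" and set_mult_carrier: "H <#> K = carrier G"
begin

lemma subgroup_left: "subgroup H G"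
  using normal_left by (rule normal_imp_subgroup)

lemma subgroup_right: "subgroup K G"
  using normal_right by (rule normal_imp_subgroup)

lemma subset_left: "H \<subseteq> carrier G"
  using subgroup_left by (rule subgroup.subset)

lemma subset_right: "K \<subseteq> carrier G"
  using subgroup_right by (rule subgroup.subset)

lemma commute: "x \<in> H \<Longrightarrow> y \<in> K \<Longrightarrow> x \<otimes> y = y \<otimes> x"
  using normal_imp_commuting normal_left normal_right inter_trivial by blast

lemma decompose:
  assumes "g \<in> carrier G" obtains x y where "x \<in> H" "y \<in> K" "g = x \<otimes> y"
  using assms set_mult_carrier unfolding set_mult_def by blast

lemma mult_interchange:
  assumes "x \<in> H" "y \<in> K" "x' \<in> H" "y' \<in> K"
  shows "(x \<otimes> y) \<otimes> (x' \<otimes> y') = (x \<otimes> x') \<otimes> (y \<otimes> y')"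
proof -
  have carr: "x \<in> carrier G" "y \<in> carrier G" "x' \<in> carrier G" "y' \<in> carrier G"
    using assms subset_left subset_right by blast+
  have "(x \<otimes> y) \<otimes> (x' \<otimes> y') = x \<otimes> (y \<otimes> x') \<otimes> y'"
    using carr by (simp add: m_assoc)
  also have "\<dots> = x \<otimes> (x' \<otimes> y) \<otimes> y'"
    using commute[OF assms(3,2)] by simp
  also have "\<dots> = (x \<otimes> x') \<otimes> (y \<otimes> y')"
    using carr by (simp add: m_assoc)
  finally show ?thesis .
qed

lemma swap: "internal_direct_product G K H"
proof (intro internal_direct_product.intro internal_direct_product_axioms.intro)
  show "K \<inter> H = {\<one>}"
    using inter_trivial by blast
  show "K <#> H = carrier G"
    using commut_normal[OF subgroup_left normal_right] set_mult_carrier by simp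
qed (fact is_group normal_right normal_left)+

lemma center_iff_commutes_left:
  assumes x: "x \<in> H"
  shows "x \<in> center G \<longleftrightarrow> (\<forall>h\<in>H. x \<otimes> h = h \<otimes> x)"
proof
  show "\<forall>h\<in>H. x \<otimes> h = h \<otimes> x" if "x \<in> center G"
    using that subset_left unfolding center_def by blast
next
  assume hx: "\<forall>h\<in>H. x \<otimes> h = h \<otimes> x"
  have xc: "x \<in> carrier G"
    using x subset_left by blast
  have "x \<otimes> g = g \<otimes> x" if g: "g \<in> carrier G" for g
  proof -
    obtain h k where hk: "h \<in> H" "k \<in> K" "g = h \<otimes> k"
      using decompose[OF g] .
    have carr: "h \<in> carrier G" "k \<in> carrier G"
      using hk subset_left subset_right by blast+
    have "x \<otimes> g = h \<otimes> x \<otimes> k"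
      using hx[rule_format, OF hk(1)] hk carr xc by (simp add: m_assoc[symmetric])
    also have "\<dots> = g \<otimes> x"
      using commute[OF x hk(2)] hk carr xc by (simp add: m_assoc)
    finally show ?thesis .
  qed
  then show "x \<in> center G"
    using xc unfolding center_def by blast
qed

lemma central_left_factor:
  assumes x: "x \<in> H" and y: "y \<in> K" and xy: "x \<otimes> y \<in> center G"
  shows "x \<in> center G"
  unfolding center_iff_commutes_left[OF x]
proof
  fix h assume h: "h \<in> H"
  have carr: "x \<in> carrier G" "y \<in> carrier G" "h \<in> carrier G"
    using x y h subset_left subset_right by blast+
  have "x \<otimes> h \<otimes> y = x \<otimes> y \<otimes> h"
    using commute[OF h y] carr by (simp add: m_assoc)
  also have "\<dots> = h \<otimes> (x \<otimes> y)"
    using xy carr by (simp add: center_def)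
  finally show "x \<otimes> h = h \<otimes> x"
    using carr by (simp flip: m_assoc)
qed

lemma center_split:
  assumes "z \<in> center G"
  shows "\<exists>x\<in>H \<inter> center G. \<exists>y\<in>K \<inter> center G. z = x \<otimes> y"
proof -
  obtain x y where xy: "x \<in> H" "y \<in> K" "z = x \<otimes> y"
    using decompose assms by (auto simp: center_def)
  have "x \<in> center G"
    using central_left_factor xy assms by blast
  moreover have "y \<in> center G"
  proof -
    have "y \<otimes> x \<in> center G"
      using xy assms commute[OF xy(1,2)] by simp
    then show ?thesis
      using internal_direct_product.central_left_factor[OF swap] xy by blast
  qed
  ultimately show ?thesis
    using xy by blast
qed

lemma derived_set_split:
  assumes "z \<in> derived_set G (carrier G)"
  shows "\<exists>x\<in>H \<inter> derived_set G (carrier G). \<exists>y\<in>K \<inter> derived_set G (carrier G). z = x \<otimes> y"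
proof -
  obtain u v where uv: "u \<in> carrier G" "v \<in> carrier G"
    and z: "z \<in> carrier G" "u \<otimes> v = z \<otimes> (v \<otimes> u)"
    using assms unfolding derived_set_carrier_iff by blast
  obtain h1 k1 where hk1: "h1 \<in> H" "k1 \<in> K" "u = h1 \<otimes> k1"
    using decompose[OF uv(1)] .
  obtain h2 k2 where hk2: "h2 \<in> H" "k2 \<in> K" "v = h2 \<otimes> k2"
    using decompose[OF uv(2)] .
  have carr: "h1 \<in> carrier G" "k1 \<in> carrier G" "h2 \<in> carrier G" "k2 \<in> carrier G"
    using hk1 hk2 subset_left subset_right by blast+
  define c1 where "c1 = h1 \<otimes> h2 \<otimes> inv h1 \<otimes> inv h2"
  define c2 where "c2 = k1 \<otimes> k2 \<otimes> inv k1 \<otimes> inv k2"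
  have "c1 \<in> H" "c2 \<in> K"
    using hk1 hk2 subgroup_left subgroup_right
    by (simp_all add: c1_def c2_def subgroup.m_closed subgroup.m_inv_closed)
  moreover have "c1 \<in> derived_set G (carrier G)" "c2 \<in> derived_set G (carrier G)"
    using carr unfolding c1_def c2_def by blast+
  ultimately have c1: "c1 \<in> H \<inter> derived_set G (carrier G)"
    and c2: "c2 \<in> K \<inter> derived_set G (carrier G)"
    by blast+
  have H_closed: "h2 \<otimes> h1 \<in> H" and K_closed: "k2 \<otimes> k1 \<in> K"
    using hk1 hk2 subgroup_left subgroup_right by (auto intro: subgroup.m_closed)
  have "u \<otimes> v = (h1 \<otimes> h2) \<otimes> (k1 \<otimes> k2)"
    using hk1 hk2 by (simp add: mult_interchange)
  also have "\<dots> = (c1 \<otimes> (h2 \<otimes> h1)) \<otimes> (c2 \<otimes> (k2 \<otimes> k1))"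
    by (simp only: c1_def c2_def commutator_mult_eq[OF carr(1,3), symmetric]
        commutator_mult_eq[OF carr(2,4), symmetric])
  also have "\<dots> = (c1 \<otimes> c2) \<otimes> ((h2 \<otimes> h1) \<otimes> (k2 \<otimes> k1))"
    using mult_interchange[of c1 c2 "h2 \<otimes> h1" "k2 \<otimes> k1"] c1 c2 H_closed K_closed by simp
  also have "\<dots> = (c1 \<otimes> c2) \<otimes> (v \<otimes> u)"
    using hk1 hk2 by (simp add: mult_interchange)
  finally have "z \<otimes> (v \<otimes> u) = (c1 \<otimes> c2) \<otimes> (v \<otimes> u)"
    using z(2) by simp
  then have "z = c1 \<otimes> c2"
    using z(1) uv c1 c2 subset_left subset_right by (simp add: subset_iff)
  with c1 c2 show ?thesis by blast
qed

lemma trivial_if_center_trivial: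
  assumes derived_central: "derived_set G (carrier G) \<subseteq> center G"
    and "H \<inter> center G \<subseteq> {\<one>}"
  shows "H = {\<one>}"
proof -
  have "x \<in> center G" if x: "x \<in> H" for x
    unfolding center_iff_commutes_left[OF x]
  proof
    fix h assume h: "h \<in> H"
    have carr: "x \<in> carrier G" "h \<in> carrier G"
      using x h subset_left by blast+
    define c where "c = x \<otimes> h \<otimes> inv x \<otimes> inv h"
    have eq: "x \<otimes> h = c \<otimes> (h \<otimes> x)"
      unfolding c_def by (rule commutator_mult_eq[OF carr])
    have "c \<in> H"
      using x h subgroup_left by (simp add: c_def subgroup.m_closed subgroup.m_inv_closed)
    moreover have "c \<in> center G"
      using derived_central carr c_def by blast
    ultimately have "c = \<one>"
      using assms(2) by blast
    then show "x \<otimes> h = h \<otimes> x"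
      using eq carr by simp
  qed
  then have "H \<subseteq> {\<one>}"
    using assms(2) by blast
  then show ?thesis
    using subgroup.one_closed[OF subgroup_left] by blast
qed

end

section \<open>Decompositions in the category of pairs\<close>

lemma S_iso_sym: "S_iso A B A' B' \<Longrightarrow> S_iso A' B' A B"
  unfolding S_iso_def by blast

lemma S_iso_iff_iso:
  assumes "group B" "A \<subseteq> carrier B" "A' \<subseteq> carrier B'"
  shows "S_iso A B A' B' \<longleftrightarrow> (\<exists>f. f \<in> iso B B' \<and> f ` A = A')"
proof
  assume "S_iso A B A' B'"
  then obtain f g where f: "f \<in> hom B B'" "f ` A \<subseteq> A'" and g: "g \<in> hom B' B" "g ` A' \<subseteq> A"
    and gf: "\<forall>x\<in>carrier B. g (f x) = x" and fg: "\<forall>y\<in>carrier B'. f (g y) = y"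
    unfolding S_iso_def S_hom_def by blast
  have "bij_betw f (carrier B) (carrier B')"
    using f(1) g(1) gf fg by (intro bij_betw_byWitness[of _ g]) (auto simp: hom_def)
  then have "f \<in> iso B B'"
    using f(1) by (simp add: iso_def)
  moreover have "A' \<subseteq> f ` A"
  proof
    fix y assume "y \<in> A'"
    then have "y = f (g y)" "g y \<in> A"
      using fg g(2) assms(3) by auto
    then show "y \<in> f ` A" by blast
  qed
  ultimately show "\<exists>f. f \<in> iso B B' \<and> f ` A = A'"
    using f(2) by blast
next
  assume "\<exists>f. f \<in> iso B B' \<and> f ` A = A'"
  then obtain f where f: "f \<in> iso B B'" and fA: "f ` A = A'" by blast
  define g where "g = inv_into (carrier B) f"
  have g: "g \<in> hom B' B"
    using group.iso_set_sym[OF assms(1) f] by (simp add: g_def iso_def)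
  have bij: "bij_betw f (carrier B) (carrier B')"
    using f by (simp add: iso_def)
  then have gf: "\<forall>x\<in>carrier B. g (f x) = x" and fg: "\<forall>y\<in>carrier B'. f (g y) = y"
    by (auto simp: g_def bij_betw_def f_inv_into_f)
  then have "g ` A' \<subseteq> A"
    using fA assms(2) by auto
  with f fA g gf fg show "S_iso A B A' B'"
    unfolding S_iso_def S_hom_def iso_def by blast
qed

lemma sub_exp_iso_image:
  assumes "group B" "group B'" and f: "f \<in> iso B B'" and "A \<subseteq> carrier B"
  shows "sub_exp p (f ` A) B' = sub_exp p A B"
proof -
  interpret group_hom B B' f
    using assms by (simp add: group_hom_def group_hom_axioms_def iso_imp_homomorphism)
  have inj: "inj_on f (carrier B)"
    using f by (simp add: iso_def bij_betw_def)
  have "f a [^]\<^bsub>B'\<^esub> k = \<one>\<^bsub>B'\<^esub> \<longleftrightarrow> a [^]\<^bsub>B\<^esub> k = \<one>\<^bsub>B\<^esub>" if "a \<in> carrier B" for a and k :: nat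
    using inj_on_eq_iff[OF inj, of "a [^]\<^bsub>B\<^esub> k" "\<one>\<^bsub>B\<^esub>"] that by (simp add: hom_nat_pow)
  then have "(\<forall>a'\<in>f ` A. a' [^]\<^bsub>B'\<^esub> k = \<one>\<^bsub>B'\<^esub>) \<longleftrightarrow> (\<forall>a\<in>A. a [^]\<^bsub>B\<^esub> k = \<one>\<^bsub>B\<^esub>)"
    for k :: nat
    using assms(4) by auto
  then show ?thesis
    unfolding sub_exp_def by simp
qed

lemma S_obj_subgroup_generated:
  assumes obj: "S_obj p n A B" and S: "subgroup S B"
  shows "S_obj p n (A \<inter> S) (subgroup_generated B S)"
proof -
  interpret comm_group B
    using obj by (simp add: S_obj_def)
  have carr: "carrier (subgroup_generated B S) = S"
    using S by (rule subgroup.carrier_subgroup_generated_subgroup)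
  have "comm_group (subgroup_generated B S)"
    using abelian_subgroup_generated comm_group_axioms by blast
  moreover have "finite S" "\<forall>x\<in>S. x [^]\<^bsub>B\<^esub> (p ^ n) = \<one>\<^bsub>B\<^esub>"
    using obj subgroup.subset[OF S] finite_subset unfolding S_obj_def by blast+
  moreover have "subgroup (A \<inter> S) (subgroup_generated B S)"
    using obj S by (intro subgroup_of_subgroup_generated subgroup_Int) (auto simp: S_obj_def)
  ultimately show ?thesis
    unfolding S_obj_def by (simp add: carr pow_subgroup_generated)
qed

lemma internal_sum_not_S_indecomposable:
  fixes B :: "'a monoid"
  assumes obj: "S_obj p n A B"
    and B1: "subgroup B1 B" and B2: "subgroup B2 B"
    and inter: "B1 \<inter> B2 \<subseteq> {\<one>\<^bsub>B\<^esub>}" and sum: "B1 <#>\<^bsub>B\<^esub> B2 = carrier B"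
    and A_split: "A \<subseteq> (A \<inter> B1) <#>\<^bsub>B\<^esub> (A \<inter> B2)"
    and nontrivial: "B1 \<noteq> {\<one>\<^bsub>B\<^esub>}" "B2 \<noteq> {\<one>\<^bsub>B\<^esub>}"
  shows "\<not> S_indecomposable p n A B"
proof -
  interpret comm_group B
    using obj by (simp add: S_obj_def)
  interpret group_disjoint_sum B B1 B2
    using B1 B2 by (simp add: group_disjoint_sum_def is_group)
  have A: "subgroup A B"
    using obj by (simp add: S_obj_def)
  let ?P = "subgroup_generated B B1 \<times>\<times> subgroup_generated B B2"
  have carrier_P: "carrier ?P = B1 \<times> B2"
    using B1 B2 by (simp add: subgroup.carrier_subgroup_generated_subgroup)
  have "(\<lambda>(x, y). x \<otimes>\<^bsub>B\<^esub> y) \<in> iso ?P B"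
    using iso_group_mul[OF comm_group_axioms] inter sum by simp
  moreover have "(\<lambda>(x, y). x \<otimes>\<^bsub>B\<^esub> y) ` ((A \<inter> B1) \<times> (A \<inter> B2)) = A"
    using A_split subgroup.m_closed[OF A] unfolding set_mult_def by fastforce
  ultimately have "S_iso ((A \<inter> B1) \<times> (A \<inter> B2)) ?P A B"
    using subgroup.subset[OF A] carrier_P
    by (subst S_iso_iff_iso) (auto intro: DirProd_group group.group_subgroup_generated is_group)
  then have "S_iso A B ((A \<inter> B1) \<times> (A \<inter> B2)) ?P"
    by (rule S_iso_sym)
  moreover have "S_obj p n (A \<inter> B1) (subgroup_generated B B1)"
    "S_obj p n (A \<inter> B2) (subgroup_generated B B2)"
    using obj B1 B2 by (simp_all add: S_obj_subgroup_generated)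
  moreover have "S_nonzero (subgroup_generated B B1)" "S_nonzero (subgroup_generated B B2)"
    using B1 B2 nontrivial by (simp_all add: S_nonzero_def subgroup.carrier_subgroup_generated_subgroup)
  ultimately show ?thesis
    unfolding S_indecomposable_def by blast
qed

section \<open>The group \<open>G(A \<subseteq> B)\<close>\<close>

locale S_object =
  fixes p n :: nat and A :: "'a set" and B :: "'a monoid"
  assumes S_obj: "S_obj p n A B" and prime: "Factorial_Ring.prime p"
begin

sublocale B: comm_group B
  using S_obj by (simp add: S_obj_def)

lemma subgroup_A: "subgroup A B"
  using S_obj by (simp add: S_obj_def)

lemma A_subset: "A \<subseteq> carrier B"
  using subgroup_A by (rule subgroup.subset)

lemma A_nat_pow_closed: "a \<in> A \<Longrightarrow> a [^]\<^bsub>B\<^esub> (k :: nat) \<in> A"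
  by (induct k) (simp_all add: subgroup.one_closed[OF subgroup_A] subgroup.m_closed[OF subgroup_A])

lemma pow_p_n_eq_one: "x \<in> carrier B \<Longrightarrow> x [^]\<^bsub>B\<^esub> (p ^ n) = \<one>\<^bsub>B\<^esub>"
  using S_obj by (simp add: S_obj_def)

abbreviation q :: nat where "q \<equiv> p ^ sub_exp p A B"

abbreviation G :: "('a \<times> 'a \<times> nat) monoid" where "G \<equiv> Gconstr p A B"

lemma pow_q_eq_one:
  assumes "a \<in> A"
  shows "a [^]\<^bsub>B\<^esub> q = \<one>\<^bsub>B\<^esub>"
proof -
  have "\<forall>a\<in>A. a [^]\<^bsub>B\<^esub> q = \<one>\<^bsub>B\<^esub>"
    unfolding sub_exp_def by (rule LeastI[of _ n]) (use pow_p_n_eq_one A_subset in auto)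
  then show ?thesis
    using assms by blast
qed

lemma q_gt_0: "0 < q"
  using prime by (simp add: prime_gt_0_nat)

lemma pow_mod_q:
  assumes a: "a \<in> A"
  shows "a [^]\<^bsub>B\<^esub> (k mod q) = a [^]\<^bsub>B\<^esub> k"
proof -
  have c: "a \<in> carrier B"
    using a A_subset by blast
  have "a [^]\<^bsub>B\<^esub> k = (a [^]\<^bsub>B\<^esub> q) [^]\<^bsub>B\<^esub> (k div q) \<otimes>\<^bsub>B\<^esub> a [^]\<^bsub>B\<^esub> (k mod q)"
    using c by (simp add: B.nat_pow_pow B.nat_pow_mult)
  then show ?thesis
    using pow_q_eq_one[OF a] c by simp
qed

text \<open>\<open>q\<close> is the least positive exponent of \<open>A\<close> among all numbers, not only among the powers
  of \<open>p\<close>; this is where primality of \<open>p\<close> enters.\<close>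
lemma q_minimal:
  assumes "d < q" and kills: "\<forall>a\<in>A. a [^]\<^bsub>B\<^esub> d = \<one>\<^bsub>B\<^esub>"
  shows "d = 0"
proof (rule ccontr)
  assume "d \<noteq> 0"
  define g where "g = gcd d (p ^ n)"
  have "g dvd p ^ n"
    by (simp add: g_def)
  then obtain j where j: "g = p ^ j"
    using divides_primepow_nat[OF prime] by blast
  have "a [^]\<^bsub>B\<^esub> g = \<one>\<^bsub>B\<^esub>" if a: "a \<in> A" for a
  proof -
    have c: "a \<in> carrier B"
      using a A_subset by blast
    have "B.ord a dvd d" "B.ord a dvd p ^ n"
      using B.pow_eq_id[OF c] kills a pow_p_n_eq_one[OF c] by blast+
    then have "B.ord a dvd g"
      by (simp add: g_def)
    then show ?thesis
      using B.pow_eq_id[OF c] by blast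
  qed
  then have "sub_exp p A B \<le> j"
    unfolding sub_exp_def using j by (auto intro: Least_le)
  then have "q \<le> g"
    using j prime by (simp add: power_increasing prime_gt_0_nat Suc_le_eq)
  moreover have "g \<le> d"
    using \<open>d \<noteq> 0\<close> by (simp add: g_def gcd_le1_nat)
  ultimately show False
    using assms(1) by simp
qed

lemma carrier_G: "carrier G = A \<times> carrier B \<times> {0..<q}"
  by (simp add: Gconstr_def Let_def)

lemma mult_G: "(a, b, d) \<otimes>\<^bsub>G\<^esub> (a', b', d') =
    (a \<otimes>\<^bsub>B\<^esub> a', b \<otimes>\<^bsub>B\<^esub> a' [^]\<^bsub>B\<^esub> d \<otimes>\<^bsub>B\<^esub> b', (d + d') mod q)"
  by (simp add: Gconstr_def Let_def)

lemma one_G: "\<one>\<^bsub>G\<^esub> = (\<one>\<^bsub>B\<^esub>, \<one>\<^bsub>B\<^esub>, 0)"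
  by (simp add: Gconstr_def Let_def)

lemma mult_G_assoc:
  assumes "x \<in> carrier G" "y \<in> carrier G" "z \<in> carrier G"
  shows "x \<otimes>\<^bsub>G\<^esub> y \<otimes>\<^bsub>G\<^esub> z = x \<otimes>\<^bsub>G\<^esub> (y \<otimes>\<^bsub>G\<^esub> z)"
proof -
  obtain a b d a' b' d' a'' b'' d'' where xyz: "x = (a, b, d)" "y = (a', b', d')" "z = (a'', b'', d'')"
    by (metis prod_cases3)
  have "a'' \<in> A" and carr: "a \<in> carrier B" "a' \<in> carrier B" "a'' \<in> carrier B"
    "b \<in> carrier B" "b' \<in> carrier B" "b'' \<in> carrier B"
    using assms xyz A_subset by (auto simp: carrier_G)
  have "a'' [^]\<^bsub>B\<^esub> ((d + d') mod q) = a'' [^]\<^bsub>B\<^esub> d \<otimes>\<^bsub>B\<^esub> a'' [^]\<^bsub>B\<^esub> d'"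
    using pow_mod_q[OF \<open>a'' \<in> A\<close>] carr by (simp add: B.nat_pow_mult)
  moreover have "(a' \<otimes>\<^bsub>B\<^esub> a'') [^]\<^bsub>B\<^esub> d = a' [^]\<^bsub>B\<^esub> d \<otimes>\<^bsub>B\<^esub> a'' [^]\<^bsub>B\<^esub> d"
    using carr by (simp add: B.pow_mult_distrib B.m_comm)
  moreover have "((d + d') mod q + d'') mod q = (d + (d' + d'') mod q) mod q"
    by (simp add: mod_add_left_eq mod_add_right_eq add.assoc)
  ultimately show ?thesis
    using xyz carr by (simp add: mult_G B.m_ac)
qed

lemma group_G: "group G"
proof (rule groupI)
  show "x \<otimes>\<^bsub>G\<^esub> y \<in> carrier G" if "x \<in> carrier G" "y \<in> carrier G" for x y
    using that q_gt_0 A_subset by (auto simp: carrier_G mult_G subgroup.m_closed[OF subgroup_A])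
  show "\<one>\<^bsub>G\<^esub> \<in> carrier G"
    using q_gt_0 subgroup.one_closed[OF subgroup_A] by (simp add: carrier_G one_G)
  show "\<one>\<^bsub>G\<^esub> \<otimes>\<^bsub>G\<^esub> x = x" if "x \<in> carrier G" for x
    using that A_subset by (auto simp: carrier_G mult_G one_G)
  show "\<exists>y\<in>carrier G. y \<otimes>\<^bsub>G\<^esub> x = \<one>\<^bsub>G\<^esub>" if x: "x \<in> carrier G" for x
  proof -
    obtain a b d where abd: "x = (a, b, d)" "a \<in> A" "b \<in> carrier B" "d < q"
      using x by (auto simp: carrier_G)
    define e where "e = (q - d) mod q"
    let ?y = "(inv\<^bsub>B\<^esub> a, inv\<^bsub>B\<^esub> (a [^]\<^bsub>B\<^esub> e \<otimes>\<^bsub>B\<^esub> b), e)"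
    have "?y \<in> carrier G"
      using abd q_gt_0 A_subset subgroup.m_inv_closed[OF subgroup_A] by (auto simp: carrier_G e_def)
    moreover have "?y \<otimes>\<^bsub>G\<^esub> x = \<one>\<^bsub>G\<^esub>"
      using abd q_gt_0 A_subset by (auto simp: mult_G one_G e_def B.m_assoc mod_add_left_eq)
    ultimately show ?thesis by blast
  qed
qed (fact mult_G_assoc)

sublocale G: group G
  by (rule group_G)

definition emb :: "'a \<Rightarrow> 'a \<times> 'a \<times> nat" where
  "emb b = (\<one>\<^bsub>B\<^esub>, b, 0)"

lemma emb_closed: "b \<in> carrier B \<Longrightarrow> emb b \<in> carrier G"
  using q_gt_0 subgroup.one_closed[OF subgroup_A] by (simp add: emb_def carrier_G)

lemma emb_mult_left:
  "c \<in> carrier B \<Longrightarrow> (a, b, d) \<in> carrier G \<Longrightarrow> emb c \<otimes>\<^bsub>G\<^esub> (a, b, d) = (a, c \<otimes>\<^bsub>B\<^esub> b, d)"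
  using A_subset by (auto simp: emb_def mult_G carrier_G)

lemma emb_mult:
  "c \<in> carrier B \<Longrightarrow> b \<in> carrier B \<Longrightarrow> emb c \<otimes>\<^bsub>G\<^esub> emb b = emb (c \<otimes>\<^bsub>B\<^esub> b)"
  using emb_mult_left[of c "\<one>\<^bsub>B\<^esub>" b 0] emb_closed by (simp add: emb_def)

lemma emb_eq_iff [simp]: "emb b = emb b' \<longleftrightarrow> b = b'"
  by (simp add: emb_def)

lemma emb_one: "emb \<one>\<^bsub>B\<^esub> = \<one>\<^bsub>G\<^esub>"
  by (simp add: emb_def one_G)

lemma emb_hom: "group_hom B G emb"
  by (intro group_hom.intro group_hom_axioms.intro homI B.is_group group_G)
    (simp_all add: emb_closed emb_mult)

lemma central_element_in_B:
  assumes g: "(a, b, d) \<in> center G"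
  shows "a = \<one>\<^bsub>B\<^esub> \<and> d = 0"
proof -
  have abd: "a \<in> A" "b \<in> carrier B" "d < q"
    using g by (auto simp: center_def carrier_G)
  have commutes: "(a, b, d) \<otimes>\<^bsub>G\<^esub> x = x \<otimes>\<^bsub>G\<^esub> (a, b, d)" if "x \<in> carrier G" for x
    using g that by (simp add: center_def)
  show ?thesis
  proof (cases "q = 1")
    case True
    then show ?thesis
      using pow_q_eq_one[OF abd(1)] abd A_subset by auto
  next
    case False
    then have "1 < q"
      using q_gt_0 by linarith
    then have "(\<one>\<^bsub>B\<^esub>, \<one>\<^bsub>B\<^esub>, 1) \<in> carrier G"
      using subgroup.one_closed[OF subgroup_A] by (simp add: carrier_G)
    from commutes[OF this] have "b = a \<otimes>\<^bsub>B\<^esub> b"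
      using abd A_subset by (auto simp: mult_G)
    then have a: "a = \<one>\<^bsub>B\<^esub>"
      using abd A_subset by (metis B.r_cancel_one' subsetD)
    have "x [^]\<^bsub>B\<^esub> d = \<one>\<^bsub>B\<^esub>" if x: "x \<in> A" for x
    proof -
      have "(x, \<one>\<^bsub>B\<^esub>, 0) \<in> carrier G"
        using x q_gt_0 by (simp add: carrier_G)
      from commutes[OF this] have "b \<otimes>\<^bsub>B\<^esub> x [^]\<^bsub>B\<^esub> d = b"
        using abd a x A_subset by (auto simp: mult_G)
      then show ?thesis
        using abd x A_subset by auto
    qed
    then show ?thesis
      using q_minimal abd a by blast
  qed
qed

lemma center_G: "center G = emb ` carrier B"
proof
  show "emb ` carrier B \<subseteq> center G"
    using emb_closed A_subset by (auto simp: center_def emb_def mult_G carrier_G B.m_comm)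
  show "center G \<subseteq> emb ` carrier B"
  proof
    fix g assume g: "g \<in> center G"
    obtain a b d where abd: "g = (a, b, d)"
      by (metis prod_cases3)
    have "a = \<one>\<^bsub>B\<^esub> \<and> d = 0"
      using central_element_in_B g abd by blast
    moreover have "b \<in> carrier B"
      using g abd by (simp add: center_def carrier_G)
    ultimately show "g \<in> emb ` carrier B"
      using abd by (auto simp: emb_def)
  qed
qed

lemma commutator_G:
  assumes "x \<in> carrier G" "y \<in> carrier G"
  shows "\<exists>c\<in>A. x \<otimes>\<^bsub>G\<^esub> y = emb c \<otimes>\<^bsub>G\<^esub> (y \<otimes>\<^bsub>G\<^esub> x)"
proof -
  obtain a b d a' b' d' where xy: "x = (a, b, d)" "y = (a', b', d')"
    by (metis prod_cases3)
  have inA: "a \<in> A" "a' \<in> A"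
    and carr: "a \<in> carrier B" "a' \<in> carrier B" "b \<in> carrier B" "b' \<in> carrier B"
    using assms xy A_subset by (auto simp: carrier_G)
  define c where "c = a' [^]\<^bsub>B\<^esub> d \<otimes>\<^bsub>B\<^esub> inv\<^bsub>B\<^esub> (a [^]\<^bsub>B\<^esub> d')"
  have "c \<in> A"
    using inA subgroup_A by (simp add: c_def subgroup.m_closed subgroup.m_inv_closed A_nat_pow_closed)
  moreover have "b \<otimes>\<^bsub>B\<^esub> a' [^]\<^bsub>B\<^esub> d \<otimes>\<^bsub>B\<^esub> b' = c \<otimes>\<^bsub>B\<^esub> (b' \<otimes>\<^bsub>B\<^esub> a [^]\<^bsub>B\<^esub> d' \<otimes>\<^bsub>B\<^esub> b)"
  proof -
    have "c \<otimes>\<^bsub>B\<^esub> a [^]\<^bsub>B\<^esub> d' = a' [^]\<^bsub>B\<^esub> d"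
      using carr by (simp add: c_def B.m_assoc)
    then show ?thesis
      using carr by (simp add: c_def B.m_ac)
  qed
  moreover have "y \<otimes>\<^bsub>G\<^esub> x \<in> carrier G" "c \<in> carrier B"
    using assms \<open>c \<in> A\<close> A_subset by auto
  ultimately show ?thesis
    using xy carr
    by (intro bexI[of _ c]) (auto simp: mult_G emb_mult_left B.m_comm[of a a'] add.commute[of d])
qed

lemma derived_set_G: "derived_set G (carrier G) = emb ` A"
proof
  show "derived_set G (carrier G) \<subseteq> emb ` A"
  proof
    fix z assume "z \<in> derived_set G (carrier G)"
    then obtain x y where xy: "x \<in> carrier G" "y \<in> carrier G" "z \<in> carrier G"
      and eq: "x \<otimes>\<^bsub>G\<^esub> y = z \<otimes>\<^bsub>G\<^esub> (y \<otimes>\<^bsub>G\<^esub> x)"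
      unfolding G.derived_set_carrier_iff by blast
    obtain c where c: "c \<in> A" "x \<otimes>\<^bsub>G\<^esub> y = emb c \<otimes>\<^bsub>G\<^esub> (y \<otimes>\<^bsub>G\<^esub> x)"
      using commutator_G[OF xy(1,2)] by blast
    then have "z = emb c"
      using eq xy emb_closed A_subset by auto
    with c show "z \<in> emb ` A" by blast
  qed
  show "emb ` A \<subseteq> derived_set G (carrier G)"
  proof
    fix z assume "z \<in> emb ` A"
    then obtain c where c: "c \<in> A" "z = emb c" by blast
    show "z \<in> derived_set G (carrier G)"
    proof (cases "q = 1")
      case True
      then have "z = \<one>\<^bsub>G\<^esub> \<otimes>\<^bsub>G\<^esub> \<one>\<^bsub>G\<^esub> \<otimes>\<^bsub>G\<^esub> inv\<^bsub>G\<^esub> \<one>\<^bsub>G\<^esub> \<otimes>\<^bsub>G\<^esub> inv\<^bsub>G\<^esub> \<one>\<^bsub>G\<^esub>"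
        using pow_q_eq_one[OF c(1)] c A_subset by (auto simp: emb_one)
      then show ?thesis by blast
    next
      case False
      then have q: "1 < q"
        using q_gt_0 by linarith
      let ?x = "(\<one>\<^bsub>B\<^esub>, \<one>\<^bsub>B\<^esub>, 1)" and ?y = "(c, \<one>\<^bsub>B\<^esub>, 0)"
      have "?x \<in> carrier G" "?y \<in> carrier G"
        using q q_gt_0 c subgroup.one_closed[OF subgroup_A] by (auto simp: carrier_G)
      moreover have "?x \<otimes>\<^bsub>G\<^esub> ?y = z \<otimes>\<^bsub>G\<^esub> (?y \<otimes>\<^bsub>G\<^esub> ?x)"
        using q q_gt_0 c A_subset by (auto simp: mult_G emb_def)
      ultimately show ?thesis
        using c emb_closed A_subset unfolding G.derived_set_carrier_iff by blast
    qed
  qed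
qed

lemma emb_vimage_split:
  assumes S: "S \<subseteq> carrier B"
    and split: "\<forall>z\<in>emb ` S. \<exists>x\<in>H \<inter> emb ` S. \<exists>y\<in>K \<inter> emb ` S. z = x \<otimes>\<^bsub>G\<^esub> y"
  shows "S \<subseteq> {b \<in> S. emb b \<in> H} <#>\<^bsub>B\<^esub> {b \<in> S. emb b \<in> K}"
proof
  fix b assume b: "b \<in> S"
  then obtain x y where xy: "x \<in> S" "y \<in> S" "emb x \<in> H" "emb y \<in> K" "emb b = emb x \<otimes>\<^bsub>G\<^esub> emb y"
    using split by blast
  have "x \<in> carrier B" "y \<in> carrier B"
    using S xy(1,2) by blast+
  then have "b = x \<otimes>\<^bsub>B\<^esub> y"
    using xy(5) emb_mult by simp
  with xy show "b \<in> {b \<in> S. emb b \<in> H} <#>\<^bsub>B\<^esub> {b \<in> S. emb b \<in> K}"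
    unfolding set_mult_def by blast
qed

lemma emb_vimage_nontrivial:
  assumes "internal_direct_product G H K" and "H \<noteq> {\<one>\<^bsub>G\<^esub>}"
  shows "{b \<in> carrier B. emb b \<in> H} \<noteq> {\<one>\<^bsub>B\<^esub>}"
proof
  assume trivial: "{b \<in> carrier B. emb b \<in> H} = {\<one>\<^bsub>B\<^esub>}"
  have "H \<inter> center G \<subseteq> {\<one>\<^bsub>G\<^esub>}"
  proof
    fix z assume "z \<in> H \<inter> center G"
    then obtain b where "b \<in> carrier B" "emb b \<in> H" "z = emb b"
      by (auto simp: center_G)
    moreover from this have "b = \<one>\<^bsub>B\<^esub>"
      using trivial by blast
    ultimately show "z \<in> {\<one>\<^bsub>G\<^esub>}"
      using emb_one by simp
  qed
  moreover have "derived_set G (carrier G) \<subseteq> center G"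
    using A_subset by (auto simp: derived_set_G center_G)
  ultimately show False
    using internal_direct_product.trivial_if_center_trivial[OF assms(1)] assms(2) by blast
qed

lemma internal_direct_product_not_S_indecomposable:
  assumes HK: "internal_direct_product G H K"
    and nontrivial: "H \<noteq> {\<one>\<^bsub>G\<^esub>}" "K \<noteq> {\<one>\<^bsub>G\<^esub>}"
  shows "\<not> S_indecomposable p n A B"
proof -
  interpret internal_direct_product G H K
    by (rule HK)
  define B1 where "B1 = {b \<in> carrier B. emb b \<in> H}"
  define B2 where "B2 = {b \<in> carrier B. emb b \<in> K}"
  have subgroups: "subgroup B1 B" "subgroup B2 B"
    unfolding B1_def B2_def
    using group_hom.subgroup_vimage[OF emb_hom] subgroup_left subgroup_right by blast+
  have inter: "B1 \<inter> B2 \<subseteq> {\<one>\<^bsub>B\<^esub>}"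
  proof
    fix b assume "b \<in> B1 \<inter> B2"
    then have "emb b = emb \<one>\<^bsub>B\<^esub>"
      using inter_trivial emb_one by (auto simp: B1_def B2_def)
    then show "b \<in> {\<one>\<^bsub>B\<^esub>}" by simp
  qed
  have "carrier B \<subseteq> B1 <#>\<^bsub>B\<^esub> B2"
    unfolding B1_def B2_def
    using emb_vimage_split[OF subset_refl] center_split[unfolded center_G] by blast
  then have sum: "B1 <#>\<^bsub>B\<^esub> B2 = carrier B"
    using B.set_mult_closed[of B1 B2] by (auto simp: B1_def B2_def)
  have "A \<subseteq> {b \<in> A. emb b \<in> H} <#>\<^bsub>B\<^esub> {b \<in> A. emb b \<in> K}"
    using derived_set_split[unfolded derived_set_G] by (intro emb_vimage_split[OF A_subset]) blast
  moreover have "{b \<in> A. emb b \<in> H} = A \<inter> B1" "{b \<in> A. emb b \<in> K} = A \<inter> B2"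
    using A_subset by (auto simp: B1_def B2_def)
  ultimately have A_split: "A \<subseteq> (A \<inter> B1) <#>\<^bsub>B\<^esub> (A \<inter> B2)"
    by simp
  have "B1 \<noteq> {\<one>\<^bsub>B\<^esub>}" "B2 \<noteq> {\<one>\<^bsub>B\<^esub>}"
    unfolding B1_def B2_def using emb_vimage_nontrivial HK swap nontrivial by blast+
  then show ?thesis
    by (rule internal_sum_not_S_indecomposable[OF S_obj subgroups inter sum A_split])
qed

lemma group_indecomposable_G:
  assumes indec: "S_indecomposable p n A B"
  shows "group_indecomposable G"
  unfolding group_indecomposable_def
proof (intro conjI notI)
  obtain b where b: "b \<in> carrier B" "b \<noteq> \<one>\<^bsub>B\<^esub>"
    using indec B.one_closed by (auto simp: S_indecomposable_def S_nonzero_def)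
  assume "carrier G = {\<one>\<^bsub>G\<^esub>}"
  then show False
    using emb_closed[OF b(1)] b(2) by (simp flip: emb_one)
next
  assume "\<exists>H K. H \<lhd> G \<and> K \<lhd> G \<and> H \<noteq> {\<one>\<^bsub>G\<^esub>} \<and> K \<noteq> {\<one>\<^bsub>G\<^esub>} \<and>
    H \<inter> K = {\<one>\<^bsub>G\<^esub>} \<and> H <#>\<^bsub>G\<^esub> K = carrier G"
  then obtain H K where "internal_direct_product G H K" "H \<noteq> {\<one>\<^bsub>G\<^esub>}" "K \<noteq> {\<one>\<^bsub>G\<^esub>}"
    by (auto simp: internal_direct_product_def internal_direct_product_axioms_def group_G)
  then show False
    using internal_direct_product_not_S_indecomposable indec by blast
qed

end

locale S_object_pair = X: S_object p n A B + Y: S_object p n' A' B'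
  for p n n' :: nat and A :: "'a set" and B :: "'a monoid" and A' :: "'b set" and B' :: "'b monoid"
begin

lemma S_iso_imp_Gconstr_iso:
  assumes "S_iso A B A' B'"
  shows "X.G \<cong> Y.G"
proof -
  obtain f where f: "f \<in> iso B B'" and fA: "f ` A = A'"
    using S_iso_iff_iso[OF X.B.is_group X.A_subset Y.A_subset] assms by blast
  interpret f: group_hom B B' f
    using f by (simp add: group_hom_def group_hom_axioms_def iso_imp_homomorphism X.B.is_group Y.B.is_group)
  have bij: "bij_betw f (carrier B) (carrier B')" and inj: "inj_on f (carrier B)"
    using f by (auto simp: iso_def bij_betw_def)
  have q: "Y.q = X.q"
    using sub_exp_iso_image[OF X.B.is_group Y.B.is_group f X.A_subset] fA by simp
  have "bij_betw f A A'"
    using inj_on_subset[OF inj X.A_subset] fA by (simp add: bij_betw_def)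
  define \<phi> where "\<phi> = map_prod f (map_prod f (id :: nat \<Rightarrow> nat))"
  have bij_\<phi>: "bij_betw \<phi> (carrier X.G) (carrier Y.G)"
    unfolding \<phi>_def X.carrier_G Y.carrier_G q
    by (intro bij_betw_map_prod \<open>bij_betw f A A'\<close> bij bij_betw_id)
  have "\<phi> \<in> hom X.G Y.G"
  proof (rule homI)
    show "\<phi> x \<in> carrier Y.G" if "x \<in> carrier X.G" for x
      using bij_betw_apply[OF bij_\<phi> that] .
    fix x y assume "x \<in> carrier X.G" "y \<in> carrier X.G"
    moreover obtain a b d a' b' d' where "x = (a, b, d)" "y = (a', b', d')"
      by (metis prod_cases3)
    ultimately show "\<phi> (x \<otimes>\<^bsub>X.G\<^esub> y) = \<phi> x \<otimes>\<^bsub>Y.G\<^esub> \<phi> y"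
      using q
      by (auto simp: \<phi>_def X.carrier_G X.mult_G Y.mult_G f.hom_nat_pow dest!: subsetD[OF X.A_subset])
  qed
  with bij_\<phi> show ?thesis
    unfolding is_iso_def iso_def by blast
qed

definition induced :: "('a \<times> 'a \<times> nat \<Rightarrow> 'b \<times> 'b \<times> nat) \<Rightarrow> 'a \<Rightarrow> 'b" where
  "induced \<phi> b = fst (snd (\<phi> (X.emb b)))"

context
  fixes \<phi> assumes \<phi>: "\<phi> \<in> iso X.G Y.G"
begin

lemma emb_image_center: "\<phi> ` X.emb ` carrier B = Y.emb ` carrier B'"
  using iso_center_image[OF X.group_G Y.group_G \<phi>] by (simp add: X.center_G Y.center_G)

lemma emb_image_commutators: "\<phi> ` X.emb ` A = Y.emb ` A'"
  using iso_derived_set_image[OF X.group_G Y.group_G \<phi>]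
  unfolding X.derived_set_G Y.derived_set_G .

lemma emb_induced:
  assumes "b \<in> carrier B"
  shows "\<phi> (X.emb b) = Y.emb (induced \<phi> b)"
proof -
  obtain b' where "\<phi> (X.emb b) = Y.emb b'"
    using emb_image_center assms by blast
  then show ?thesis
    by (simp add: induced_def Y.emb_def)
qed

lemma image_induced: "induced \<phi> ` carrier B = carrier B'" "induced \<phi> ` A = A'"
proof -
  have "induced \<phi> ` S = (\<lambda>z. fst (snd z)) ` \<phi> ` X.emb ` S" for S
    unfolding induced_def by (simp add: image_image)
  moreover have "(\<lambda>z. fst (snd z)) ` Y.emb ` T = T" for T
    by (simp add: image_image Y.emb_def)
  ultimately show "induced \<phi> ` carrier B = carrier B'" "induced \<phi> ` A = A'"
    by (simp_all only: emb_image_center emb_image_commutators)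
qed

lemma induced_iso: "induced \<phi> \<in> iso B B'"
proof -
  interpret \<phi>: group_hom X.G Y.G \<phi>
    using \<phi> by (simp add: group_hom_def group_hom_axioms_def iso_imp_homomorphism X.group_G Y.group_G)
  have closed: "induced \<phi> x \<in> carrier B'" if "x \<in> carrier B" for x
    using that image_induced(1) by blast
  have inj: "inj_on \<phi> (carrier X.G)"
    using \<phi> by (simp add: iso_def bij_betw_def)
  have "inj_on (induced \<phi>) (carrier B)"
  proof (rule inj_onI)
    fix x y assume xy: "x \<in> carrier B" "y \<in> carrier B" "induced \<phi> x = induced \<phi> y"
    then have "\<phi> (X.emb x) = \<phi> (X.emb y)"
      by (simp add: emb_induced)
    then show "x = y"
      using inj_on_eq_iff[OF inj X.emb_closed[OF xy(1)] X.emb_closed[OF xy(2)]] by simp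
  qed
  moreover have "induced \<phi> \<in> hom B B'"
  proof (rule homI)
    fix x y assume xy: "x \<in> carrier B" "y \<in> carrier B"
    have "Y.emb (induced \<phi> (x \<otimes>\<^bsub>B\<^esub> y)) = \<phi> (X.emb x \<otimes>\<^bsub>X.G\<^esub> X.emb y)"
      using xy by (simp add: emb_induced X.emb_mult)
    also have "\<dots> = Y.emb (induced \<phi> x \<otimes>\<^bsub>B'\<^esub> induced \<phi> y)"
      using xy closed by (simp add: X.emb_closed emb_induced Y.emb_mult)
    finally show "induced \<phi> (x \<otimes>\<^bsub>B\<^esub> y) = induced \<phi> x \<otimes>\<^bsub>B'\<^esub> induced \<phi> y"
      by simp
  qed (rule closed)
  ultimately show ?thesis
    using image_induced(1) by (simp add: iso_def bij_betw_def)
qed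

end

lemma Gconstr_iso_imp_S_iso:
  assumes "X.G \<cong> Y.G"
  shows "S_iso A B A' B'"
proof -
  obtain \<phi> where \<phi>: "\<phi> \<in> iso X.G Y.G"
    using assms by (auto simp: is_iso_def)
  show ?thesis
    using S_iso_iff_iso[OF X.B.is_group X.A_subset Y.A_subset] induced_iso[OF \<phi>] image_induced(2)[OF \<phi>]
    by blast
qed

lemma S_iso_iff_Gconstr_iso: "S_iso A B A' B' \<longleftrightarrow> Gconstr p A B \<cong> Gconstr p A' B'"
  using S_iso_imp_Gconstr_iso Gconstr_iso_imp_S_iso by blast

end

theorem lemma1:
  fixes p n :: nat
    and A :: "'a set" and B :: "'a monoid"
    and A' :: "'b set" and B' :: "'b monoid"
  assumes "Factorial_Ring.prime p"
  shows "(S_indecomposable p n A B \<longrightarrow> group_indecomposable (Gconstr p A B))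
     \<and> (S_indecomposable p n A B \<and> S_indecomposable p n A' B' \<longrightarrow>
          (S_iso A B A' B' \<longleftrightarrow> Gconstr p A B \<cong> Gconstr p A' B'))"
proof (intro conjI impI)
  assume indec: "S_indecomposable p n A B"
  then have "S_object p n A B"
    using assms by (simp add: S_object_def S_indecomposable_def)
  then show "group_indecomposable (Gconstr p A B)"
    using indec by (rule S_object.group_indecomposable_G)
next
  assume "S_indecomposable p n A B \<and> S_indecomposable p n A' B'"
  then have "S_object_pair p n n A B A' B'"
    using assms by (simp add: S_object_pair_def S_object_def S_indecomposable_def)
  then show "S_iso A B A' B' \<longleftrightarrow> Gconstr p A B \<cong> Gconstr p A' B'"
    by (rule S_object_pair.S_iso_iff_Gconstr_iso)
qed

end
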